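(* Let $n\ge 0$ and $m\ge 2$ be integers with $n\ge1$ or $m\ge3$, let $N=m^{2^n}$, and let $\mathbb{A}$ be the structure defined in the context. Then there is no polymorphism $t:A^{N}\to A$ of $\mathbb{A}$ such that $t(a,n,n,\dots,n)=t(n,a,n,\dots,n)=\dots=t(n,\dots,n,a)=n$ (i.e., $t$ returns $n$ whenever exactly one argument equals $a$ and all other arguments equal $n$).
   Context: Fix integers $n\ge 0$ and $m\ge 2$. Let $A=\{a,0,1,\dots,n\}$. For $i\in\{0,\dots,n+1\}$ let $A_i=\{a,0,1,\dots,i-1\}$, so $A_0=\{a\}$ and $A_{n+1}=A$. For $i\in\{0,\dots,n\}$ let $S_i\subseteq A^{m+1}$ be the relation $$S_i=\Big(A_i\times\{a,i\}^m\setminus\{(a,i,i,\dots,i)\}\Big)\cup\{(j,j,\dots,j)\in A^{m+1}: i<j\le n\}.$$ Let $\mathbb{A}$ be the relational structure with universe $A$ whose relations are $S_0,\dots,S_n$ (each of arity $m+1$) together with every nonempty subset $X\subseteq A$ as a unary relation. A polymorphism of $\mathbb{A}$ is an operation $t:A^k\to A$ compatible with all these relations, where compatibility with a relation $R$ means that applying $t$ coordinatewise to any $k$ tuples of $R$ yields a tuple of $R$. *)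

theory Defs
  imports Main
begin

text \<open>Elements of the universe: the special element a is None, the number i is Some i.
  Tuples are lists; an operation of arity k is a function on lists of length k.\<close>

definition univ :: "nat \<Rightarrow> nat option set" where
  "univ n = insert None (Some ` {0..n})"

definition Aset :: "nat \<Rightarrow> nat option set" where
  "Aset i = insert None (Some ` {0..<i})"

definition Srel :: "nat \<Rightarrow> nat \<Rightarrow> nat \<Rightarrow> nat option list set" where
  "Srel n m i =
     {xs. length xs = m + 1 \<and> hd xs \<in> Aset i \<and> (\<forall>x\<in>set (tl xs). x \<in> {None, Some i})
          \<and> xs \<noteq> None # replicate m (Some i)}
     \<union> {replicate (m + 1) (Some j) | j. i < j \<and> j \<le> n}"

definition compatible :: "nat \<Rightarrow> (nat option list \<Rightarrow> nat option) \<Rightarrow> nat \<Rightarrow> nat option list set \<Rightarrow> bool" where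
  "compatible k t r R \<longleftrightarrow>
     (\<forall>rs :: nat \<Rightarrow> nat option list. (\<forall>i<k. rs i \<in> R) \<longrightarrow>
        map (\<lambda>j. t (map (\<lambda>i. rs i ! j) [0..<k])) [0..<r] \<in> R)"

definition polymorphism :: "nat \<Rightarrow> nat \<Rightarrow> nat \<Rightarrow> (nat option list \<Rightarrow> nat option) \<Rightarrow> bool" where
  "polymorphism n m k t \<longleftrightarrow>
     (\<forall>i\<le>n. compatible k t (m + 1) (Srel n m i)) \<and>
     (\<forall>X. X \<noteq> {} \<and> X \<subseteq> univ n \<longrightarrow> compatible k t 1 {[x] | x. x \<in> X})"

end

theory Submission
  imports Defs
begin

text \<open>Call \<open>t\<close> \<open>(K, T)\<close>-safe if it never returns \<open>a\<close> on a tuple over \<open>{a} \<union> T\<close> with at most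
  \<open>K\<close> occurrences of \<open>a\<close>. The hypothesis says that \<open>t\<close> is \<open>(1, {n})\<close>-safe. Compatibility with
  \<open>S\<^sub>i\<close> trades the value \<open>i\<close> for all values below \<open>i\<close> at the price of a factor \<open>m\<close> in \<open>K\<close>:
  spread the \<open>a\<close>'s of a tuple over \<open>m\<close> rows, fill the rest with \<open>i\<close>, and read \<open>S\<^sub>i\<close> downwards.
  Eliminating the values \<open>n, n - 1, \<dots>, 0\<close> in the order of a binary counter takes
  \<open>2\<^sup>n\<close> such steps, so \<open>t\<close> is \<open>(m\<^bsup>2\<^sup>n\<^esup>, {})\<close>-safe; but \<open>t(a, \<dots>, a) = a\<close>.\<close>

definition safe :: "(nat option list \<Rightarrow> nat option) \<Rightarrow> nat \<Rightarrow> nat \<Rightarrow> nat set \<Rightarrow> bool" where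
  "safe t N K T \<longleftrightarrow> (\<forall>u. length u = N \<longrightarrow> set u \<subseteq> insert None (Some ` T) \<longrightarrow>
      card {k. k < N \<and> u ! k = None} \<le> K \<longrightarrow> t u \<noteq> None)"

lemma finite_partition_card_le:
  fixes Y :: "'a set"
  assumes "finite Y" "card Y \<le> m * K"
  shows "\<exists>f. (\<forall>y\<in>Y. f y < m) \<and> (\<forall>s. card {y\<in>Y. f y = s} \<le> K)"
  using assms
proof (induction m arbitrary: Y)
  case 0
  then show ?case by simp
next
  case (Suc m)
  obtain Z where Z: "Z \<subseteq> Y" "card Z \<le> K" "card (Y - Z) \<le> m * K"
  proof (cases "card Y \<le> K")
    case True
    then show ?thesis using that[of Y] by simp
  next
    case False
    then obtain Z where "Z \<subseteq> Y" "card Z = K"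
      using obtain_subset_with_card_n[of K Y] by auto
    with Suc.prems show ?thesis
      using that[of Z] by (simp add: card_Diff_subset finite_subset)
  qed
  obtain f where f: "\<forall>y\<in>Y - Z. f y < m" "\<forall>s. card {y\<in>Y - Z. f y = s} \<le> K"
    using Suc.IH[of "Y - Z"] Suc.prems(1) Z(3) by auto
  define g where "g y = (if y \<in> Z then m else f y)" for y
  have "card {y\<in>Y. g y = s} \<le> K" for s
  proof -
    have "{y\<in>Y. g y = s} \<subseteq> (if s = m then Z else {y\<in>Y - Z. f y = s})"
      using f(1) by (auto simp: g_def)
    moreover have "finite (if s = m then Z else {y\<in>Y - Z. f y = s})"
      using Suc.prems(1) Z(1) finite_subset by auto
    ultimately have "card {y\<in>Y. g y = s} \<le> card (if s = m then Z else {y\<in>Y - Z. f y = s})"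
      by (rule card_mono[rotated])
    then show ?thesis using Z(2) f(2)[rule_format, of s] by (cases "s = m") simp_all
  qed
  moreover have "\<forall>y\<in>Y. g y < Suc m" using f(1) by (simp add: g_def less_SucI)
  ultimately show ?case by blast
qed

lemma polymorphism_replicate:
  assumes "polymorphism n m N t" "x \<in> univ n"
  shows "t (replicate N x) = x"
proof -
  have "compatible N t 1 {[y] | y. y \<in> {x}}"
    using assms unfolding polymorphism_def by blast
  then have "[t (map (\<lambda>i. x) [0..<N])] \<in> {[y] | y. y \<in> {x}}"
    unfolding compatible_def by (drule_tac x="\<lambda>l. [x]" in spec) simp
  then show ?thesis by (simp add: map_replicate_trivial)
qed

lemma compatible_rows:
  assumes "compatible k t (m + 1) R" "length u = k" "\<And>s. s < m \<Longrightarrow> length (r s) = k"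
    and "\<And>l. l < k \<Longrightarrow> u ! l # map (\<lambda>s. r s ! l) [0..<m] \<in> R"
  shows "t u # map (\<lambda>s. t (r s)) [0..<m] \<in> R"
proof -
  define col where "col l = u ! l # map (\<lambda>s. r s ! l) [0..<m]" for l
  have "map (\<lambda>j. t (map (\<lambda>l. col l ! j) [0..<k])) [0..<Suc m] \<in> R"
    using assms(1)[unfolded compatible_def, rule_format, of col] assms(4) by (simp add: col_def)
  moreover have "map (\<lambda>l. col l ! 0) [0..<k] = u"
    using assms(2) by (intro nth_equalityI) (simp_all add: col_def)
  moreover have "map (\<lambda>s. t (map (\<lambda>l. col l ! Suc s) [0..<k])) [0..<m] = map (\<lambda>s. t (r s)) [0..<m]"
    using assms(3) by (intro map_cong refl arg_cong[where f=t] nth_equalityI) (simp_all add: col_def)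
  ultimately show ?thesis
    by (simp only: map_upt_Suc)
qed

lemma Srel_None_hd:
  assumes "None # xs \<in> Srel n m i"
  shows "None \<in> set xs"
proof (rule ccontr)
  assume "None \<notin> set xs"
  moreover have "length xs = m" "set xs \<subseteq> {None, Some i}" "xs \<noteq> replicate m (Some i)"
    using assms by (auto simp: Srel_def)
  ultimately show False
    using replicate_length_same[of xs "Some i"] by auto
qed

lemma Srel_None_column:
  assumes "j < m" shows "None # map (\<lambda>s. if s = j then None else Some i) [0..<m] \<in> Srel n m i"
proof -
  have "map (\<lambda>s. if s = j then None else Some i) [0..<m] ! j = None" using assms by simp
  then have "map (\<lambda>s. if s = j then None else Some i) [0..<m] \<noteq> replicate m (Some i)"
    using assms by (metis nth_replicate option.distinct(1))
  then show ?thesis by (auto simp: Srel_def Aset_def)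
qed

lemma Srel_below_column: "v < i \<Longrightarrow> Some v # replicate m (Some i) \<in> Srel n m i"
  by (simp add: Srel_def Aset_def)

lemma Srel_above_column: "i < v \<Longrightarrow> v \<le> n \<Longrightarrow> Some v # replicate m (Some v) \<in> Srel n m i"
  unfolding Srel_def by (metis (mono_tags, lifting) UnI2 mem_Collect_eq replicate_Suc Suc_eq_plus1)

lemma safe_step:
  assumes poly: "polymorphism n m N t" and "i \<le> n" "H \<subseteq> {i<..n}" "L \<subseteq> {0..<i}"
    and safe: "safe t N K (insert i H)"
  shows "safe t N (m * K) (L \<union> H)"
  unfolding safe_def
proof (intro allI impI notI)
  fix u :: "nat option list"
  assume len: "length u = N" and vals: "set u \<subseteq> insert None (Some ` (L \<union> H))"
    and card_None: "card {k. k < N \<and> u ! k = None} \<le> m * K" and tu: "t u = None"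
  define Y where "Y = {k. k < N \<and> u ! k = None}"
  obtain f where f: "\<forall>k\<in>Y. f k < m" "\<forall>s. card {k\<in>Y. f k = s} \<le> K"
    using finite_partition_card_le[of Y m K] card_None by (auto simp: Y_def)
  have u_nth: "u ! k = None \<or> (\<exists>v\<in>L \<union> H. u ! k = Some v)" if "k < N" for k
    using vals len that nth_mem by fastforce
  define r where "r s = map (\<lambda>k. case u ! k of None \<Rightarrow> if f k = s then None else Some i
      | Some v \<Rightarrow> Some (max i v)) [0..<N]" for s
  have row_safe: "t (r s) \<noteq> None" for s
  proof -
    have "set (r s) \<subseteq> insert None (Some ` insert i H)"
      using u_nth assms(4) by (fastforce simp: r_def split: option.split)
    moreover have "{k. k < N \<and> r s ! k = None} = {k\<in>Y. f k = s}"
      by (auto simp: r_def Y_def split: option.splits if_splits)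
    moreover have "length (r s) = N" by (simp add: r_def)
    ultimately show ?thesis
      using safe[unfolded safe_def, rule_format, of "r s"] f(2) by simp
  qed
  have columns: "u ! l # map (\<lambda>s. r s ! l) [0..<m] \<in> Srel n m i" if l: "l < N" for l
  proof (cases "u ! l")
    case None
    have "map (\<lambda>s. r s ! l) [0..<m] = map (\<lambda>s. if s = f l then None else Some i) [0..<m]"
      using None l by (intro map_cong) (auto simp: r_def)
    moreover have "f l < m" using f(1) None l by (auto simp: Y_def)
    ultimately show ?thesis
      using Srel_None_column[of "f l" m i n] None by (simp only:)
  next
    case (Some v)
    then have "v \<in> L \<union> H" using u_nth[OF l] by auto
    then show ?thesis
      using Some l assms(3,4) Srel_below_column[of v i m n] Srel_above_column[of i v n m]
      by (auto simp: r_def map_replicate_trivial max_def)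
  qed
  have "compatible N t (m + 1) (Srel n m i)"
    using poly \<open>i \<le> n\<close> unfolding polymorphism_def by blast
  then have "t u # map (\<lambda>s. t (r s)) [0..<m] \<in> Srel n m i"
    using compatible_rows[OF _ len _ columns] by (simp add: r_def)
  then have "None # map (\<lambda>s. t (r s)) [0..<m] \<in> Srel n m i"
    using tu by simp
  then have "None \<in> set (map (\<lambda>s. t (r s)) [0..<m])"
    by (rule Srel_None_hd)
  with row_safe show False by (metis ex_map_conv)
qed

text \<open>To remove the values \<open>0, \<dots>, i\<close>: remove \<open>0, \<dots>, i - 1\<close>, trade \<open>i\<close> for \<open>0, \<dots>, i - 1\<close>
  by \<open>safe_step\<close>, and remove \<open>0, \<dots>, i - 1\<close> again; hence the exponent \<open>2\<^sup>i - 1\<close>.\<close>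

lemma safe_drop_initial_segment:
  assumes poly: "polymorphism n m N t"
  shows "i \<le> n \<Longrightarrow> H \<subseteq> {i..n} \<Longrightarrow> safe t N K ({0..<i} \<union> H)
    \<Longrightarrow> safe t N (K * m ^ (2 ^ i - 1)) H"
proof (induction i arbitrary: H K)
  case 0
  then show ?case by simp
next
  case (Suc i)
  have "{0..<Suc i} \<union> H = {0..<i} \<union> insert i H" by auto
  then have "safe t N K ({0..<i} \<union> insert i H)"
    using Suc.prems(3) by simp
  moreover have "insert i H \<subseteq> {i..n}"
    using Suc.prems(1,2) by auto
  ultimately have safe_i: "safe t N (K * m ^ (2 ^ i - 1)) (insert i H)"
    using Suc.IH Suc.prems(1) by simp
  have "safe t N (m * (K * m ^ (2 ^ i - 1))) ({0..<i} \<union> H)"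
    by (rule safe_step[OF poly _ _ _ safe_i]) (use Suc.prems(1,2) in auto)
  moreover have "H \<subseteq> {i..n}"
    using Suc.prems(2) by auto
  ultimately have "safe t N (m * (K * m ^ (2 ^ i - 1)) * m ^ (2 ^ i - 1)) H"
    using Suc.IH Suc.prems(1) by simp
  moreover have "m * (K * m ^ (2 ^ i - 1)) * m ^ (2 ^ i - 1) = K * m ^ (2 ^ Suc i - 1)"
  proof -
    have "2 ^ Suc i - 1 = Suc ((2 ^ i - 1) + (2 ^ i - 1))"
      using one_le_power[of "2::nat" i] by (simp only: power_Suc) linarith
    then show ?thesis
      by (simp only: power_Suc power_add ac_simps)
  qed
  ultimately show ?case by (simp only:)
qed

lemma safe_one_top:
  assumes "polymorphism n m N t"
    and "\<forall>i<N. t (map (\<lambda>j. if j = i then None else Some n) [0..<N]) = Some n"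
  shows "safe t N 1 {n}"
  unfolding safe_def
proof (intro allI impI)
  fix u :: "nat option list"
  assume len: "length u = N" and vals: "set u \<subseteq> insert None (Some ` {n})"
    and card_None: "card {k. k < N \<and> u ! k = None} \<le> 1"
  have u_nth: "u ! k \<noteq> None \<Longrightarrow> u ! k = Some n" if "k < N" for k
    using vals len that nth_mem by fastforce
  show "t u \<noteq> None"
  proof (cases "\<exists>k<N. u ! k = None")
    case False
    then have "u = replicate N (Some n)"
      using u_nth len by (intro nth_equalityI) auto
    then show ?thesis
      using polymorphism_replicate[OF assms(1)] by (simp add: univ_def)
  next
    case True
    then obtain k where k: "k < N" "u ! k = None" by blast
    have unique: "j = k" if "j < N" "u ! j = None" for j
      using card_None k that card_le_Suc0_iff_eq[of "{k. k < N \<and> u ! k = None}"] by auto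
    have "u ! j = (if j = k then None else Some n)" if "j < N" for j
      using unique[OF that] k u_nth[OF that] by (cases "j = k") auto
    then have "u = map (\<lambda>j. if j = k then None else Some n) [0..<N]"
      using len by (intro nth_equalityI) simp_all
    then show ?thesis
      using assms(2) k by simp
  qed
qed

lemma polymorphism_not_safe_full:
  assumes "polymorphism n m N t"
  shows "\<not> safe t N N {}"
proof
  assume "safe t N N {}"
  moreover have "set (replicate N None) \<subseteq> insert None (Some ` {})"
    by (simp add: set_replicate_conv_if)
  moreover have "card {k. k < N \<and> replicate N None ! k = None} \<le> N"
    by (simp add: subset_eq card_mono[of "{..<N}", simplified])
  ultimately have "t (replicate N None) \<noteq> None"
    unfolding safe_def by (metis length_replicate)
  then show False
    using polymorphism_replicate[OF assms] by (simp add: univ_def)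
qed

theorem mainTheorem3:
  fixes n m N :: nat
  assumes "m \<ge> 2" and "n \<ge> 1 \<or> m \<ge> 3" and "N = m ^ (2 ^ n)"
  shows "\<not> (\<exists>t. polymorphism n m N t \<and>
            (\<forall>i<N. t (map (\<lambda>j. if j = i then None else Some n) [0..<N]) = Some n))"
proof
  assume "\<exists>t. polymorphism n m N t \<and>
            (\<forall>i<N. t (map (\<lambda>j. if j = i then None else Some n) [0..<N]) = Some n)"
  then obtain t where poly: "polymorphism n m N t"
    and hyp: "\<forall>i<N. t (map (\<lambda>j. if j = i then None else Some n) [0..<N]) = Some n" by blast
  have "safe t N (m * 1) ({0..<n} \<union> {})"
    by (rule safe_step[OF poly]) (use safe_one_top[OF poly hyp] in auto)
  then have "safe t N (m * m ^ (2 ^ n - 1)) {}"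
    using safe_drop_initial_segment[OF poly, of n "{}" m] by simp
  moreover have "m * m ^ (2 ^ n - 1) = N"
  proof -
    have "2 ^ n = Suc (2 ^ n - 1)"
      using one_le_power[of "2::nat" n] by linarith
    then show ?thesis
      using assms(3) by (metis power_Suc)
  qed
  ultimately have "safe t N N {}" by (simp only:)
  with polymorphism_not_safe_full[OF poly] show False by blast
qed

end
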